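(* Let $k$ be an algebraically closed field of characteristic $p>0$, let $G$ be a finite group, $K$ a subgroup of index $m$, and $W$ a finite-dimensional $kK$-module. Let $g_1 = 1, g_2, \dots, g_m$ be representatives of the left cosets of $K$ in $G$, and let $V = \mathrm{Ind}_K^G(W) = W_1\oplus\cdots\oplus W_m$ with $W_i = g_i\otimes W$. Write $\mathrm{End}_k(V) = \bigoplus_{i,j}\mathrm{Hom}_k(W_i,W_j)$ and let $\pi_{ij}: \mathrm{End}_k(V)\to \mathrm{Hom}_k(W_i,W_j)$ be the corresponding projections. Let $\rho: G\to\mathrm{GL}(V)$ be the representation. If $(G,V)$ is weakly adequate, then for each $j$, the set $\{\pi_{1j}(\rho(g)) : g \in g_jK,\ g \text{ has order prime to } p\}$ spans $\mathrm{Hom}_k(W_1,W_j)$. In particular, if some coset $g_jK$ contains no element of order prime to $p$, then $(G,V)$ is not weakly adequate.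
   Context: $(G,V)$ is weakly adequate if $\mathrm{End}_k(V)$ is spanned by $\{\rho(g): g\in G,\ \rho(g)\text{ semisimple}\}$. *)

theory Defs
  imports "HOL-Computational_Algebra.Polynomial" "HOL-Algebra.Multiplicative_Group"
          "Jordan_Normal_Form.Matrix"
begin

(* A square matrix over an algebraically closed field is semisimple iff it is
   diagonalizable, i.e. similar to a diagonal matrix. *)
definition semisimple_mat :: "'k::field mat \<Rightarrow> bool" where
  "semisimple_mat A \<longleftrightarrow> (\<exists>D. diagonal_mat D \<and> similar_mat A D)"

definition in_span_mat :: "nat \<Rightarrow> 'k::field mat set \<Rightarrow> 'k mat \<Rightarrow> bool" where
  "in_span_mat n S M \<longleftrightarrow>
     (\<exists>xs :: ('k \<times> 'k mat) list. set (map snd xs) \<subseteq> S \<and>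
        M = foldr (\<lambda>(c, A) B. c \<cdot>\<^sub>m A + B) xs (0\<^sub>m n n))"

definition spans_mat :: "nat \<Rightarrow> 'k::field mat set \<Rightarrow> bool" where
  "spans_mat n S \<longleftrightarrow> (\<forall>M \<in> carrier_mat n n. in_span_mat n S M)"

(* Matrix of the induced representation Ind_H^G(W) on V = W_0 + ... + W_{m-1},
   W_i = g_i \<otimes> W (coordinates of W_i are indices i*d .. i*d+d-1), where
   sigma : H -> GL_d(k) is the representation on W and g_0,...,g_{m-1} are left coset
   representatives.  x (g_i \<otimes> w) = g_j \<otimes> sigma(g_j^{-1} x g_i) w, where x g_i \<in> g_j H. *)
definition ind_rep ::
  "('g, 'b) monoid_scheme \<Rightarrow> 'g set \<Rightarrow> ('g \<Rightarrow> 'k::field mat) \<Rightarrow> (nat \<Rightarrow> 'g) \<Rightarrow> nat \<Rightarrow> nat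
     \<Rightarrow> 'g \<Rightarrow> 'k mat" where
  "ind_rep G H \<sigma> g m d x =
     mat (m * d) (m * d) (\<lambda>(r, c).
       let j = r div d; i = c div d; y = inv\<^bsub>G\<^esub> (g j) \<otimes>\<^bsub>G\<^esub> x \<otimes>\<^bsub>G\<^esub> g i
       in if y \<in> H then \<sigma> y $$ (r mod d, c mod d) else 0)"

(* projection pi_{ij} : End(V) -> Hom(W_i, W_j): the (j,i) block *)
definition block_proj :: "nat \<Rightarrow> nat \<Rightarrow> nat \<Rightarrow> 'k::field mat \<Rightarrow> 'k mat" where
  "block_proj d i j A = mat d d (\<lambda>(r, c). A $$ (j * d + r, i * d + c))"

definition weakly_adequate :: "('g, 'b) monoid_scheme \<Rightarrow> nat \<Rightarrow> ('g \<Rightarrow> 'k::field mat) \<Rightarrow> bool" where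
  "weakly_adequate G n \<rho> \<longleftrightarrow>
     spans_mat n {\<rho> x | x. x \<in> carrier G \<and> semisimple_mat (\<rho> x)}"

end

theory Submission
  imports Defs
begin

text \<open>
  The matrices \<open>\<rho>(x)\<close> of the induced representation are block monomial: the \<open>(j, i)\<close> block
  is \<open>\<sigma>(g_j\<inverse> x g_i)\<close> if \<open>g_j\<inverse> x g_i \<in> H\<close> and zero otherwise. In particular the block
  \<open>\<pi>_{0j}(\<rho>(x))\<close> is the invertible matrix \<open>\<sigma>(g_j\<inverse> x)\<close> if \<open>x \<in> g_j H\<close> and zero otherwise.

  If \<open>\<rho>(x)\<close> is semisimple and \<open>x\<close> has order \<open>p^a n\<close> with \<open>p\<close> not dividing \<open>n\<close>, then
  \<open>\<rho>(x)^n = 1\<close>, because in characteristic \<open>p\<close> the only \<open>p^a\<close>-th root of unity is \<open>1\<close>.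
  Taking \<open>p^a u \<equiv> 1 (mod n)\<close>, the element \<open>s = x^(p^a u)\<close> has order dividing \<open>n\<close> and
  \<open>\<rho>(s) = \<rho>(x)\<close>, so by the block description \<open>s\<close> lies in the same coset as \<open>x\<close>. Hence the
  linear map \<open>\<pi>_{0j}\<close>, which is onto \<open>Hom(W_0, W_j)\<close>, sends the span of the semisimple
  \<open>\<rho>(x)\<close>, which is all of \<open>End(V)\<close> by weak adequacy, into the span of the \<open>\<pi>_{0j}(\<rho>(s))\<close>
  with \<open>s \<in> g_j H\<close> of order prime to \<open>p\<close>.
\<close>

lemma pow_mat_add:
  assumes "A \<in> carrier_mat n n"
  shows "A ^\<^sub>m (a + b) = A ^\<^sub>m a * A ^\<^sub>m b"
proof (induction b)
  case (Suc b)
  then show ?case using assms by (simp add: assoc_mult_mat[of _ n n _ n _ n])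
qed (use assms in simp)

lemma pow_mat_mult:
  assumes "A \<in> carrier_mat n n"
  shows "A ^\<^sub>m (a * b) = (A ^\<^sub>m a) ^\<^sub>m b"
proof (induction b)
  case (Suc b)
  have "A ^\<^sub>m (a * Suc b) = A ^\<^sub>m (a * b) * A ^\<^sub>m a"
    using pow_mat_add[OF assms, of "a * b" a] by (simp add: add.commute)
  then show ?case using Suc by simp
qed (use assms in simp)

lemma one_pow_mat [simp]: "(1\<^sub>m n :: 'a::semiring_1 mat) ^\<^sub>m k = 1\<^sub>m n"
  by (induction k) simp_all

lemma index_pow_mat_diagonal:
  assumes D: "D \<in> carrier_mat n n" and diag: "diagonal_mat D" and i: "i < n" and j: "j < n"
  shows "(D ^\<^sub>m k) $$ (i, j) = (if i = j then D $$ (i, i) ^ k else 0)"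
  using j
proof (induction k arbitrary: j)
  case 0
  then show ?case using D i by simp
next
  case (Suc k)
  have "(D ^\<^sub>m Suc k) $$ (i, j) = (\<Sum>l = 0..<n. (D ^\<^sub>m k) $$ (i, l) * D $$ (l, j))"
    using D i Suc.prems by (simp add: scalar_prod_def)
  also have "\<dots> = (\<Sum>l = 0..<n. if l = i then D $$ (i, i) ^ k * D $$ (i, j) else 0)"
    using Suc.IH by (intro sum.cong) auto
  also have "\<dots> = (if i = j then D $$ (i, i) ^ Suc k else 0)"
    using diag D i Suc.prems unfolding diagonal_mat_def by (auto simp: power_commutes)
  finally show ?case .
qed

lemma char_prime_power_root_of_unity:
  fixes \<mu> :: "'k::field"
  assumes "CHAR('k) = p" and "prime p" and "\<mu> ^ (p ^ a) = 1"
  shows "\<mu> = 1"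
proof -
  have "((\<mu> - 1) + 1) ^ (p ^ a) = (\<mu> - 1) ^ (p ^ a) + 1 ^ (p ^ a)"
    by (rule freshmans_dream') (use assms in auto)
  then have "(\<mu> - 1) ^ (p ^ a) = 0" using assms(3) by simp
  then show ?thesis by simp
qed

lemma semisimple_mat_pow_char_power_cancel:
  fixes A :: "'k::field mat"
  assumes A: "A \<in> carrier_mat n n" and ss: "semisimple_mat A"
    and char: "CHAR('k) = p" and p: "prime p" and pow: "A ^\<^sub>m (p ^ a * k) = 1\<^sub>m n"
  shows "A ^\<^sub>m k = 1\<^sub>m n"
proof -
  obtain D P Q where diag: "diagonal_mat D" and wit: "similar_mat_wit A D P Q"
    using ss unfolding semisimple_mat_def similar_mat_def by blast
  note carr = similar_mat_witD2[OF A wit]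
  have D_pow: "D ^\<^sub>m j = Q * A ^\<^sub>m j * P" for j
    using similar_mat_wit_pow_id[OF similar_mat_wit_sym[OF wit]] .
  have D_pow_one: "D ^\<^sub>m (p ^ a * k) = 1\<^sub>m n"
    using D_pow[of "p ^ a * k"] pow carr by simp
  have "(D $$ (i, i) ^ k) ^ (p ^ a) = 1" if "i < n" for i
  proof -
    have "(D ^\<^sub>m (p ^ a * k)) $$ (i, i) = 1" using D_pow_one that by simp
    then show ?thesis
      using index_pow_mat_diagonal[OF carr(5) diag that that]
      by (simp add: power_mult[symmetric] mult.commute)
  qed
  then have "D ^\<^sub>m k = 1\<^sub>m n"
    using char_prime_power_root_of_unity[OF char p] index_pow_mat_diagonal[OF carr(5) diag] carr(5)
    by (intro eq_matI) auto
  then show ?thesis using similar_mat_wit_pow_id[OF wit, of k] carr by simp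
qed

abbreviation lincomb_mat :: "nat \<Rightarrow> ('k::field \<times> 'k mat) list \<Rightarrow> 'k mat" where
  "lincomb_mat n xs \<equiv> foldr (\<lambda>(c, A) B. c \<cdot>\<^sub>m A + B) xs (0\<^sub>m n n)"

lemma lincomb_mat_carrier:
  "set (map snd xs) \<subseteq> carrier_mat n n \<Longrightarrow> lincomb_mat n xs \<in> carrier_mat n n"
  by (induction xs) auto

lemma in_span_mat_linear_image:
  assumes lin: "\<And>c A B. A \<in> carrier_mat n n \<Longrightarrow> B \<in> carrier_mat n n \<Longrightarrow>
      f (c \<cdot>\<^sub>m A + B) = c \<cdot>\<^sub>m f A + f B"
    and zero: "f (0\<^sub>m n n) = 0\<^sub>m k k"
    and S: "S \<subseteq> carrier_mat n n" and M: "in_span_mat n S M"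
  shows "in_span_mat k (f ` S) (f M)"
proof -
  obtain xs where xs: "set (map snd xs) \<subseteq> S" "M = lincomb_mat n xs"
    using M unfolding in_span_mat_def by blast
  have "f (lincomb_mat n xs) = lincomb_mat k (map (\<lambda>(c, A). (c, f A)) xs)"
    using xs(1)
  proof (induction xs)
    case (Cons ca xs)
    obtain c A where ca: "ca = (c, A)" by fastforce
    have xs_S: "set (map snd xs) \<subseteq> S" and "A \<in> S" using Cons.prems ca by auto
    then have "A \<in> carrier_mat n n" "lincomb_mat n xs \<in> carrier_mat n n"
      using S lincomb_mat_carrier[OF subset_trans[OF xs_S S]] by auto
    then show ?case using Cons lin ca by simp
  qed (simp add: zero)
  moreover have "set (map snd (map (\<lambda>(c, A). (c, f A)) xs)) \<subseteq> f ` S"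
    using xs(1) by auto
  ultimately show ?thesis unfolding in_span_mat_def using xs(2) by blast
qed

lemma in_span_mat_drop_zero:
  assumes T: "T \<subseteq> carrier_mat n n" and S: "S \<subseteq> insert (0\<^sub>m n n) T"
    and M: "in_span_mat n S M"
  shows "in_span_mat n T M"
proof -
  obtain xs where xs: "set (map snd xs) \<subseteq> S" "M = lincomb_mat n xs"
    using M unfolding in_span_mat_def by blast
  let ?ys = "filter (\<lambda>(c, A). A \<noteq> 0\<^sub>m n n) xs"
  have S_carrier: "S \<subseteq> carrier_mat n n" using S T by auto
  have "lincomb_mat n xs = lincomb_mat n ?ys"
    using xs(1)
  proof (induction xs)
    case (Cons ca xs)
    have "lincomb_mat n xs \<in> carrier_mat n n"
      using Cons.prems S_carrier by (intro lincomb_mat_carrier) (auto simp: image_subset_iff)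
    then show ?case using Cons by (auto split: prod.split)
  qed simp
  moreover have "set (map snd ?ys) \<subseteq> T" using xs(1) S by (auto simp: image_subset_iff)
  ultimately show ?thesis unfolding in_span_mat_def using xs(2) by blast
qed

lemma block_index_less:
  fixes l m e d :: nat
  assumes "l < m" and "e < d"
  shows "l * d + e < m * d"
proof -
  have "l * d + e < Suc l * d" using assms(2) by simp
  also have "\<dots> \<le> m * d" using assms(1) by (intro mult_le_mono1) simp
  finally show ?thesis .
qed

lemma block_index_div_mod:
  fixes l e d :: nat
  assumes "e < d"
  shows "(l * d + e) div d = l" and "(l * d + e) mod d = e"
  using assms by simp_all

lemma block_index_cases:
  fixes r m d :: nat
  assumes "r < m * d"
  obtains j a where "j < m" and "a < d" and "r = j * d + a"
proof
  show "r div d < m" using assms by (simp add: less_mult_imp_div_less)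
  have "0 < d" using assms by (cases d) simp_all
  then show "r mod d < d" by simp
  show "r = r div d * d + r mod d" by simp
qed

lemma sum_upt_mult_single_block:
  fixes F :: "nat \<Rightarrow> 'a::comm_monoid_add"
  assumes "\<And>k. k < m * d \<Longrightarrow> k div d \<noteq> l \<Longrightarrow> F k = 0" and "l < m"
  shows "(\<Sum>k = 0..<m * d. F k) = (\<Sum>e = 0..<d. F (l * d + e))"
proof -
  have block: "l * d \<le> k \<and> k < l * d + d" if "k div d = l" and "0 < d" for k
  proof -
    have "k = l * d + k mod d" using \<open>k div d = l\<close> by (metis div_mult_mod_eq)
    moreover have "k mod d < d" using \<open>0 < d\<close> by simp
    ultimately show ?thesis by linarith
  qed
  have "l * d + d \<le> m * d" using \<open>l < m\<close> by (metis add.commute mult_Suc mult_le_mono1 Suc_leI)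
  then have "(\<Sum>k = 0..<m * d. F k) = (\<Sum>k = l * d..<l * d + d. F k)"
    using assms(1) block by (intro sum.mono_neutral_right) fastforce+
  also have "\<dots> = (\<Sum>e = 0..<d. F (l * d + e))"
    by (subst sum.atLeastLessThan_shift_0) (simp add: comp_def)
  finally show ?thesis .
qed

lemma block_proj_carrier [simp]: "block_proj d i j A \<in> carrier_mat d d"
  and dim_row_block_proj [simp]: "dim_row (block_proj d i j A) = d"
  and dim_col_block_proj [simp]: "dim_col (block_proj d i j A) = d"
  by (simp_all add: block_proj_def)

lemma index_block_proj [simp]:
  "r < d \<Longrightarrow> c < d \<Longrightarrow> block_proj d i j A $$ (r, c) = A $$ (j * d + r, i * d + c)"
  by (simp add: block_proj_def)

lemma block_proj_smult_add:
  assumes "A \<in> carrier_mat (m * d) (m * d)" and "B \<in> carrier_mat (m * d) (m * d)"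
    and "i < m" and "j < m"
  shows "block_proj d i j (c \<cdot>\<^sub>m A + B) = c \<cdot>\<^sub>m block_proj d i j A + block_proj d i j B"
  by (rule eq_matI) (use assms in \<open>auto simp: block_index_less\<close>)

lemma block_proj_zero:
  "i < m \<Longrightarrow> j < m \<Longrightarrow> block_proj d i j (0\<^sub>m (m * d) (m * d)) = 0\<^sub>m d d"
  by (rule eq_matI) (auto simp: block_index_less)

lemma block_proj_surj:
  assumes "i < m" and "j < m" and M: "M \<in> carrier_mat d d"
  obtains N where "N \<in> carrier_mat (m * d) (m * d)" and "block_proj d i j N = M"
proof
  define N where "N = mat (m * d) (m * d)
    (\<lambda>(r, c). if r div d = j \<and> c div d = i then M $$ (r mod d, c mod d) else 0)"
  show "N \<in> carrier_mat (m * d) (m * d)" by (simp add: N_def)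
  show "block_proj d i j N = M"
  proof (rule eq_matI)
    fix r c assume "r < dim_row M" and "c < dim_col M"
    then have rc: "r < d" "c < d" using M by auto
    then have "j * d + r < m * d" "i * d + c < m * d"
      using block_index_less assms(1,2) by blast+
    with rc show "block_proj d i j N $$ (r, c) = M $$ (r, c)"
      by (simp add: N_def)
  qed (use M in auto)
qed

lemma (in group) l_coset_mem_iff:
  assumes "subgroup H G" and "x \<in> carrier G" and "y \<in> carrier G"
  shows "x \<in> y <# H \<longleftrightarrow> inv y \<otimes> x \<in> H"
  using subgroup.l_coset_eq_rcong[OF assms(1) is_group assms(3)] assms(2,3)
  by (auto simp: r_congruent_def)

lemma (in group) subgroup_mult_mem_iff:
  assumes H: "subgroup H G" and x: "x \<in> carrier G" and h: "h \<in> H"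
  shows "x \<otimes> h \<in> H \<longleftrightarrow> x \<in> H"
proof
  assume "x \<otimes> h \<in> H"
  then have "x \<otimes> h \<otimes> inv h \<in> H"
    using H h by (blast intro: subgroup.m_closed subgroup.m_inv_closed)
  moreover have "x \<otimes> h \<otimes> inv h = x"
    using x h subgroup.mem_carrier[OF H] by (simp add: m_assoc)
  ultimately show "x \<in> H" by simp
next
  assume "x \<in> H"
  then show "x \<otimes> h \<in> H" using H h by (blast intro: subgroup.m_closed)
qed

locale induced_rep = group G for G :: "('g, 'b) monoid_scheme" (structure) +
  fixes H :: "'g set" and \<sigma> :: "'g \<Rightarrow> 'k::field mat" and g :: "nat \<Rightarrow> 'g" and m d :: nat
  assumes subgroup_H: "subgroup H G"
    and rep_carrier: "\<And>h. h \<in> H \<Longrightarrow> \<sigma> h \<in> carrier_mat d d"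
    and rep_one: "\<sigma> \<one> = 1\<^sub>m d"
    and rep_mult: "\<And>h h'. h \<in> H \<Longrightarrow> h' \<in> H \<Longrightarrow> \<sigma> (h \<otimes> h') = \<sigma> h * \<sigma> h'"
    and coset_reps_carrier: "\<And>i. i < m \<Longrightarrow> g i \<in> carrier G"
    and coset_rep_0: "g 0 = \<one>"
    and coset_reps_unique: "\<And>x. x \<in> carrier G \<Longrightarrow> \<exists>!i. i < m \<and> x \<in> g i <# H"
begin

abbreviation \<rho> :: "'g \<Rightarrow> 'k mat" where
  "\<rho> \<equiv> ind_rep G H \<sigma> g m d"

lemma H_carrier: "h \<in> H \<Longrightarrow> h \<in> carrier G"
  using subgroup.mem_carrier[OF subgroup_H] .

lemma coset_index_exists:
  assumes "z \<in> carrier G"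
  obtains l where "l < m" and "inv (g l) \<otimes> z \<in> H"
  using coset_reps_unique[OF assms] l_coset_mem_iff[OF subgroup_H assms] coset_reps_carrier by blast

lemma coset_index_unique:
  assumes "z \<in> carrier G" and "l < m" and "l' < m"
    and "inv (g l) \<otimes> z \<in> H" and "inv (g l') \<otimes> z \<in> H"
  shows "l = l'"
  using coset_reps_unique[OF assms(1)] l_coset_mem_iff[OF subgroup_H assms(1)] coset_reps_carrier assms(2-5)
  by blast

lemma ind_rep_carrier [simp]: "\<rho> x \<in> carrier_mat (m * d) (m * d)"
  and dim_row_ind_rep [simp]: "dim_row (\<rho> x) = m * d"
  and dim_col_ind_rep [simp]: "dim_col (\<rho> x) = m * d"
  by (simp_all add: ind_rep_def)

lemma index_ind_rep_block:
  assumes "j < m" and "i < m" and "a < d" and "b < d"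
  shows "\<rho> x $$ (j * d + a, i * d + b) =
    (if inv (g j) \<otimes> x \<otimes> g i \<in> H then \<sigma> (inv (g j) \<otimes> x \<otimes> g i) $$ (a, b) else 0)"
  using assms by (simp add: ind_rep_def block_index_less block_index_div_mod Let_def)

lemma index_ind_rep_outside_block:
  assumes z: "z \<in> carrier G" and i: "i < m" and l: "l < m" and zl: "inv (g l) \<otimes> z \<otimes> g i \<in> H"
    and k: "k < m * d" "k div d \<noteq> l" and b: "b < d"
  shows "\<rho> z $$ (k, i * d + b) = 0"
proof -
  obtain k' e where k': "k' < m" "e < d" "k = k' * d + e" using k(1) by (rule block_index_cases)
  have gi: "g i \<in> carrier G" and gk': "g k' \<in> carrier G" using i k' coset_reps_carrier by auto
  have "inv (g k') \<otimes> z \<otimes> g i \<notin> H"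
  proof
    assume "inv (g k') \<otimes> z \<otimes> g i \<in> H"
    then have "k' = l"
      using coset_index_unique[of "z \<otimes> g i" k' l] zl z gi gk' l k' coset_reps_carrier
      by (simp add: m_assoc)
    with k k' show False by (simp add: block_index_div_mod)
  qed
  with k' b i show ?thesis by (simp add: index_ind_rep_block)
qed

lemma ind_rep_mult:
  assumes x: "x \<in> carrier G" and z: "z \<in> carrier G"
  shows "\<rho> (x \<otimes> z) = \<rho> x * \<rho> z"
proof (rule eq_matI)
  fix r c assume "r < dim_row (\<rho> x * \<rho> z)" and "c < dim_col (\<rho> x * \<rho> z)"
  then have r: "r < m * d" and c: "c < m * d" by simp_all
  obtain j a where j: "j < m" and a: "a < d" and r_eq: "r = j * d + a"
    using r by (rule block_index_cases)
  obtain i b where i: "i < m" and b: "b < d" and c_eq: "c = i * d + b"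
    using c by (rule block_index_cases)
  have gi: "g i \<in> carrier G" and gj: "g j \<in> carrier G" using i j coset_reps_carrier by auto
  obtain l where l: "l < m" and zgi: "inv (g l) \<otimes> (z \<otimes> g i) \<in> H"
    using coset_index_exists[of "z \<otimes> g i"] z gi by blast
  have gl: "g l \<in> carrier G" using l coset_reps_carrier by blast
  define h h' where "h = inv (g j) \<otimes> x \<otimes> g l" and "h' = inv (g l) \<otimes> z \<otimes> g i"
  have h'H: "h' \<in> H" using zgi gl z gi by (simp add: h'_def m_assoc)
  have hc: "h \<in> carrier G" using gj x gl by (simp add: h_def)
  have "h \<otimes> h' = inv (g j) \<otimes> x \<otimes> (g l \<otimes> inv (g l)) \<otimes> z \<otimes> g i"
    using gj gl gi x z by (simp add: h_def h'_def m_assoc del: r_inv Units_r_inv)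
  also have "\<dots> = inv (g j) \<otimes> (x \<otimes> z) \<otimes> g i"
    using gj gl gi x z by (simp add: m_assoc)
  finally have prod: "inv (g j) \<otimes> (x \<otimes> z) \<otimes> g i = h \<otimes> h'" ..
  have "(\<rho> x * \<rho> z) $$ (r, c) = (\<Sum>k = 0..<m * d. \<rho> x $$ (r, k) * \<rho> z $$ (k, c))"
    using r c by (simp add: scalar_prod_def)
  also have "\<dots> = (\<Sum>e = 0..<d. \<rho> x $$ (r, l * d + e) * \<rho> z $$ (l * d + e, c))"
    using index_ind_rep_outside_block[OF z i l] h'H b c_eq
    by (intro sum_upt_mult_single_block l) (simp add: h'_def)
  also have "\<dots> = (\<Sum>e = 0..<d. if h \<in> H then \<sigma> h $$ (a, e) * \<sigma> h' $$ (e, b) else 0)"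
    using h'H i j l a b by (intro sum.cong) (simp_all add: r_eq c_eq index_ind_rep_block h_def h'_def)
  also have "\<dots> = (if h \<otimes> h' \<in> H then \<sigma> (h \<otimes> h') $$ (a, b) else 0)"
  proof (cases "h \<in> H")
    case True
    then show ?thesis
      using subgroup_mult_mem_iff[OF subgroup_H hc h'H] rep_mult[OF True h'H]
        rep_carrier[OF True] rep_carrier[OF h'H] a b by (simp add: scalar_prod_def)
  qed (use subgroup_mult_mem_iff[OF subgroup_H hc h'H] in simp)
  also have "\<dots> = \<rho> (x \<otimes> z) $$ (r, c)"
    using i j a b by (simp add: r_eq c_eq index_ind_rep_block prod)
  finally show "\<rho> (x \<otimes> z) $$ (r, c) = (\<rho> x * \<rho> z) $$ (r, c)" ..
qed simp_all

lemma ind_rep_one: "\<rho> \<one> = 1\<^sub>m (m * d)"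
proof (rule eq_matI)
  fix r c assume "r < dim_row (1\<^sub>m (m * d))" and "c < dim_col (1\<^sub>m (m * d))"
  then have r: "r < m * d" and c: "c < m * d" by simp_all
  obtain j a where j: "j < m" and a: "a < d" and r_eq: "r = j * d + a"
    using r by (rule block_index_cases)
  obtain i b where i: "i < m" and b: "b < d" and c_eq: "c = i * d + b"
    using c by (rule block_index_cases)
  have gi: "g i \<in> carrier G" and gj: "g j \<in> carrier G" using i j coset_reps_carrier by auto
  have one_H: "\<one> \<in> H" using subgroup.one_closed[OF subgroup_H] .
  show "\<rho> \<one> $$ (r, c) = 1\<^sub>m (m * d) $$ (r, c)"
  proof (cases "i = j")
    case True
    then show ?thesis using r c gi i a b rep_one one_H by (simp add: r_eq c_eq index_ind_rep_block)
  next
    case False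
    have "inv (g i) \<otimes> g i \<in> H" using gi one_H by simp
    then have "inv (g j) \<otimes> g i \<notin> H" using coset_index_unique[OF gi i j] False by blast
    moreover have "r \<noteq> c"
    proof
      assume "r = c"
      then have "j = i" using a b by (metis r_eq c_eq block_index_div_mod(1))
      with False show False by simp
    qed
    ultimately show ?thesis using r c gi gj i j a b by (simp add: r_eq c_eq index_ind_rep_block)
  qed
qed simp_all

lemma ind_rep_pow: "x \<in> carrier G \<Longrightarrow> \<rho> (x [^] n) = \<rho> x ^\<^sub>m n"
  by (induction n) (simp_all add: ind_rep_one ind_rep_mult)

lemma block_proj_ind_rep:
  assumes j: "j < m" and x: "x \<in> carrier G"
  shows "block_proj d 0 j (\<rho> x) = (if x \<in> g j <# H then \<sigma> (inv (g j) \<otimes> x) else 0\<^sub>m d d)"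
proof -
  have gj: "g j \<in> carrier G" using j coset_reps_carrier by blast
  have coset: "x \<in> g j <# H \<longleftrightarrow> inv (g j) \<otimes> x \<in> H"
    using l_coset_mem_iff[OF subgroup_H x gj] .
  have "block_proj d 0 j (\<rho> x) $$ (a, b) =
      (if x \<in> g j <# H then \<sigma> (inv (g j) \<otimes> x) $$ (a, b) else 0)" if "a < d" "b < d" for a b
    using index_ind_rep_block[of j 0 a b x] that j gj x coset by (simp add: coset_rep_0)
  moreover have "x \<in> g j <# H \<Longrightarrow> \<sigma> (inv (g j) \<otimes> x) \<in> carrier_mat d d"
    using coset rep_carrier by blast
  ultimately show ?thesis by (intro eq_matI) auto
qed

lemma rep_neq_zero:
  assumes h: "h \<in> H" and "0 < d"
  shows "\<sigma> h \<noteq> 0\<^sub>m d d"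
proof
  assume "\<sigma> h = 0\<^sub>m d d"
  moreover have "inv h \<in> H" using h subgroup.m_inv_closed[OF subgroup_H] by blast
  ultimately have "\<sigma> (h \<otimes> inv h) = 0\<^sub>m d d"
    using rep_mult[OF h] rep_carrier[of "inv h"] by simp
  then have "(1\<^sub>m d :: 'k mat) $$ (0, 0) = 0\<^sub>m d d $$ (0, 0)"
    using h H_carrier rep_one by simp
  with \<open>0 < d\<close> show False by simp
qed

lemma ind_rep_eq_imp_same_coset:
  assumes "0 < d" and j: "j < m" and x: "x \<in> carrier G" and s: "s \<in> carrier G"
    and eq: "\<rho> s = \<rho> x" and coset: "x \<in> g j <# H"
  shows "s \<in> g j <# H"
proof (rule ccontr)
  have gj: "g j \<in> carrier G" using j coset_reps_carrier by blast
  have "inv (g j) \<otimes> x \<in> H" using l_coset_mem_iff[OF subgroup_H x gj] coset by blast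
  then have "block_proj d 0 j (\<rho> x) \<noteq> 0\<^sub>m d d"
    using block_proj_ind_rep[OF j x] coset rep_neq_zero \<open>0 < d\<close> by simp
  moreover assume "s \<notin> g j <# H"
  ultimately show False using block_proj_ind_rep[OF j s] eq by simp
qed

lemma ind_rep_eq_element_of_order_dvd:
  assumes x: "x \<in> carrier G" and q: "0 < q" and cop: "coprime q n"
    and ord: "x [^] (q * n) = \<one>" and pow: "\<rho> x ^\<^sub>m n = 1\<^sub>m (m * d)"
  obtains s where "s \<in> carrier G" and "\<rho> s = \<rho> x" and "ord s dvd n"
proof -
  obtain u v where uv: "q * u = n * v + 1"
    using bezout_nat[of q n] q cop by (auto simp: coprime_iff_gcd_eq_1)
  have "\<rho> (x [^] (q * u)) = (\<rho> x ^\<^sub>m n) ^\<^sub>m v * \<rho> x"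
    using x by (simp add: ind_rep_mult ind_rep_pow uv pow_mat_mult[OF ind_rep_carrier])
  then have \<rho>_eq: "\<rho> (x [^] (q * u)) = \<rho> x" using pow by simp
  have "(x [^] (q * u)) [^] n = (x [^] (q * n)) [^] u"
    using x by (simp add: nat_pow_pow mult.commute mult.left_commute)
  then have ord_dvd: "ord (x [^] (q * u)) dvd n" using x ord by (simp add: pow_eq_id[symmetric])
  show ?thesis by (rule that[OF _ \<rho>_eq ord_dvd]) (use x in simp)
qed

lemma semisimple_ind_rep_eq_p'_element:
  assumes fin: "finite (carrier G)" and char: "CHAR('k) = p" and p: "prime p"
    and x: "x \<in> carrier G" and ss: "semisimple_mat (\<rho> x)"
  obtains s where "s \<in> carrier G" and "\<rho> s = \<rho> x" and "coprime (ord s) p"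
proof -
  define q where "q = p ^ multiplicity p (ord x)"
  have "ord x \<noteq> 0" using ord_ge_1[OF fin x] by simp
  moreover have "\<not> is_unit p" using p not_prime_unit by blast
  ultimately obtain n where ord: "ord x = q * n" and "\<not> p dvd n"
    unfolding q_def by (rule multiplicity_decompose')
  have cop_n: "coprime n p"
    using prime_imp_coprime[OF p \<open>\<not> p dvd n\<close>] by (simp add: coprime_commute)
  have x_pow: "x [^] (q * n) = \<one>" using pow_ord_eq_1[OF x] by (simp add: ord)
  then have "\<rho> x ^\<^sub>m (q * n) = 1\<^sub>m (m * d)"
    using x by (metis ind_rep_one ind_rep_pow)
  then have \<rho>_pow: "\<rho> x ^\<^sub>m n = 1\<^sub>m (m * d)"
    using semisimple_mat_pow_char_power_cancel[OF ind_rep_carrier ss char p] by (simp add: q_def)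
  have "0 < q" using p by (simp add: q_def prime_gt_0_nat)
  moreover have "coprime q n" using cop_n by (simp add: q_def coprime_commute)
  ultimately obtain s where s: "s \<in> carrier G" "\<rho> s = \<rho> x" and "ord s dvd n"
    using ind_rep_eq_element_of_order_dvd[OF x _ _ x_pow \<rho>_pow] by blast
  then obtain k where "n = ord s * k" by blast
  with cop_n have "coprime (ord s) p" by simp
  with s show ?thesis by (rule that)
qed

lemma block_proj_semisimple_ind_rep:
  assumes fin: "finite (carrier G)" and char: "CHAR('k) = p" and p: "prime p"
    and j: "j < m" and x: "x \<in> carrier G" and ss: "semisimple_mat (\<rho> x)"
  shows "block_proj d 0 j (\<rho> x) \<in> insert (0\<^sub>m d d)
    {block_proj d 0 j (\<rho> s) | s. s \<in> carrier G \<and> s \<in> g j <# H \<and> coprime (ord s) p}"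
proof (cases "x \<in> g j <# H \<and> 0 < d")
  case True
  obtain s where s: "s \<in> carrier G" "\<rho> s = \<rho> x" "coprime (ord s) p"
    using semisimple_ind_rep_eq_p'_element[OF fin char p x ss] .
  moreover have "s \<in> g j <# H" using ind_rep_eq_imp_same_coset True j x s by blast
  ultimately show ?thesis by (metis (mono_tags, lifting) insertCI mem_Collect_eq)
next
  case outside: False
  have "block_proj d 0 j (\<rho> x) = 0\<^sub>m d d"
  proof (cases "d = 0")
    case True
    then show ?thesis by (intro eq_matI) auto
  next
    case False
    with outside show ?thesis using block_proj_ind_rep[OF j x] by simp
  qed
  then show ?thesis by simp
qed

end

theorem lemma5p1:
  fixes G :: "('g, 'b) monoid_scheme" and H :: "'g set"
    and \<sigma> :: "'g \<Rightarrow> 'k::alg_closed_field mat"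
    and g :: "nat \<Rightarrow> 'g" and m d p :: nat
  assumes char: "CHAR('k) = p" and p_prime: "prime p"
    and grp: "group G" and fin: "finite (carrier G)"
    and sub: "subgroup H G"
    and rep_dim: "\<forall>h \<in> H. \<sigma> h \<in> carrier_mat d d"
    and rep_one: "\<sigma> \<one>\<^bsub>G\<^esub> = 1\<^sub>m d"
    and rep_mult: "\<forall>h1 \<in> H. \<forall>h2 \<in> H. \<sigma> (h1 \<otimes>\<^bsub>G\<^esub> h2) = \<sigma> h1 * \<sigma> h2"
    and g_carrier: "\<forall>i < m. g i \<in> carrier G"
    and g0: "g 0 = \<one>\<^bsub>G\<^esub>"
    and cosets: "\<forall>x \<in> carrier G. \<exists>!i. i < m \<and> x \<in> g i <#\<^bsub>G\<^esub> H"
    and wa: "weakly_adequate G (m * d) (ind_rep G H \<sigma> g m d)"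
  shows "\<forall>j < m. spans_mat d
           {block_proj d 0 j (ind_rep G H \<sigma> g m d x) | x.
              x \<in> carrier G \<and> x \<in> g j <#\<^bsub>G\<^esub> H \<and> coprime (group.ord G x) p}"
proof (intro allI impI)
  fix j assume j: "j < m"
  then have m0: "0 < m" by simp
  interpret induced_rep G H \<sigma> g m d
    using grp sub rep_dim rep_one rep_mult g_carrier g0 cosets
    by (intro induced_rep.intro induced_rep_axioms.intro) auto
  let ?S = "{\<rho> x | x. x \<in> carrier G \<and> semisimple_mat (\<rho> x)}"
  let ?T = "{block_proj d 0 j (\<rho> x) | x.
    x \<in> carrier G \<and> x \<in> g j <#\<^bsub>G\<^esub> H \<and> coprime (group.ord G x) p}"
  have T_carrier: "?T \<subseteq> carrier_mat d d" by auto
  have image_sub: "block_proj d 0 j ` ?S \<subseteq> insert (0\<^sub>m d d) ?T"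
  proof (rule image_subsetI)
    fix A assume "A \<in> ?S"
    then obtain x where x: "x \<in> carrier G" and ss: "semisimple_mat (\<rho> x)" and A: "A = \<rho> x"
      by blast
    show "block_proj d 0 j A \<in> insert (0\<^sub>m d d) ?T"
      unfolding A by (rule block_proj_semisimple_ind_rep[OF fin char p_prime j x ss])
  qed
  show "spans_mat d ?T" unfolding spans_mat_def
  proof
    fix M :: "'k mat" assume "M \<in> carrier_mat d d"
    then obtain N where N: "N \<in> carrier_mat (m * d) (m * d)" and M: "block_proj d 0 j N = M"
      using block_proj_surj[OF m0 j] by blast
    have "in_span_mat (m * d) ?S N"
      using bspec[OF wa[unfolded weakly_adequate_def spans_mat_def] N] .
    then have "in_span_mat d (block_proj d 0 j ` ?S) M"
      unfolding M[symmetric] using block_proj_smult_add[OF _ _ m0 j] block_proj_zero[OF m0 j]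
      by (intro in_span_mat_linear_image) auto
    then show "in_span_mat d ?T M" by (rule in_span_mat_drop_zero[OF T_carrier image_sub])
  qed
qed

end
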